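(* For any positive integer $k$, as formal power series in $q$, $$\sum_{n=0}^{\infty}D_k(n)q^n=\sum_{n=0}^{\infty}q^{nk}(-q^{n+1};q)_\infty=2(-q;q)_\infty\sum_{j=0}^{k-1}(-1)^j(q^{k-j};q)_j+(-1)^k(q;q)_{k-1}.$$
   Context: $D_k(n)$ is the number of partitions of $n$ into non-negative parts (the part $0$ is allowed) in which the smallest part appears exactly $k$ times and no other part is repeated, with the convention $D_k(0)=1$. For $N\ge1$, $(a;q)_N=\prod_{i=0}^{N-1}(1-aq^i)$; also $(a;q)_0=1$ and $(a;q)_\infty=\lim_{N\to\infty}(a;q)_N$. *)

theory Defs
  imports "HOL-Computational_Algebra.Formal_Power_Series" "HOL-Library.Multiset"
begin

(* A partition of n into non-negative parts (0 allowed) is a multiset of naturals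
   with sum n. *)
definition D :: "nat \<Rightarrow> nat \<Rightarrow> nat" where
  "D k n = (if n = 0 then 1 else
     card {M :: nat multiset. M \<noteq> {#} \<and> sum_mset M = n \<and>
             count M (Min (set_mset M)) = k \<and>
             (\<forall>x \<in> set_mset M. x \<noteq> Min (set_mset M) \<longrightarrow> count M x = 1)})"

definition Dgf :: "nat \<Rightarrow> int fps" where
  "Dgf k = Abs_fps (\<lambda>n. int (D k n))"

definition qpoch :: "int fps \<Rightarrow> int fps \<Rightarrow> nat \<Rightarrow> int fps" where
  "qpoch a q N = (\<Prod>i<N. 1 - a * q ^ i)"

(* infinite q-Pochhammer symbol: limit in the fps (X-adic) metric *)
definition qpoch_inf :: "int fps \<Rightarrow> int fps \<Rightarrow> int fps" where
  "qpoch_inf a q = lim (\<lambda>N. qpoch a q N)"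

end

theory Submission imports Defs begin

(* Removing the k copies of the smallest part m from a partition counted by D_k(n) leaves a
   partition of n - km into distinct parts > m, and such partitions are counted by the
   coefficients of P_m = (-q^(m+1);q)_\<infinity>; this gives the series F_k = \<Sum>_m q^(mk) P_m.
   Since P_m = (1 + q^(m+1)) P_(m+1), shifting the summation index gives
   q^k F_k = (F_k - P_0) + (F_(k+1) - P_0), and telescoping gives F_1 = 2 P_0 - 1.
   The closed form follows by induction on k, because its alternating sum C_k satisfies
   C_(k+1) = 1 - (1 - q^k) C_k. *)

unbundle fps_syntax

(* Formal_Power_Series provides the X-adic metric on fps but not the topological algebra
   classes; these instances make the generic rules (tendsto_mult, sums_add, sums_Suc, ...)
   applicable to power series. *)

instance fps :: (ab_group_add) topological_ab_group_add
proof
  fix a b :: "'a fps"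
  show "((\<lambda>x. fst x + snd x) \<longlongrightarrow> a + b) (nhds a \<times>\<^sub>F nhds b)"
  proof (rule tendsto_fpsI)
    fix n
    have "\<forall>\<^sub>F x in nhds a \<times>\<^sub>F nhds b. fst x $ n = a $ n \<and> snd x $ n = b $ n"
      by (intro eventually_prodI eventually_fps_nth_eq_nhds_fps)
    then show "\<forall>\<^sub>F x in nhds a \<times>\<^sub>F nhds b. (fst x + snd x) $ n = (a + b) $ n"
      by eventually_elim simp
  qed
  show "(uminus \<longlongrightarrow> - a) (nhds a)"
    by (rule tendsto_fpsI) (use eventually_fps_nth_eq_nhds_fps in \<open>auto elim: eventually_mono\<close>)
qed

instance fps :: (ring) topological_semigroup_mult
proof
  fix a b :: "'a fps"
  show "((\<lambda>x. fst x * snd x) \<longlongrightarrow> a * b) (nhds a \<times>\<^sub>F nhds b)"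
  proof (rule tendsto_fpsI)
    fix n
    have "\<forall>\<^sub>F x in nhds a \<times>\<^sub>F nhds b. (\<forall>i\<le>n. fst x $ i = a $ i) \<and> (\<forall>i\<le>n. snd x $ i = b $ i)"
      by (intro eventually_prodI eventually_fps_nth_eq_nhds_fps_strong)
    then show "\<forall>\<^sub>F x in nhds a \<times>\<^sub>F nhds b. (fst x * snd x) $ n = (a * b) $ n"
      by eventually_elim (simp add: fps_mult_nth)
  qed
qed

lemma sums_mult_left:
  fixes f :: "nat \<Rightarrow> 'a::{topological_semigroup_mult, semiring_0}"
  shows "f sums a \<Longrightarrow> (\<lambda>n. c * f n) sums (c * a)"
  unfolding sums_def sum_distrib_left[symmetric] by (rule tendsto_mult_left)

lemma subsets_with_sum_insert:
  assumes "finite A" "a \<notin> A"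
  shows "{S. S \<subseteq> insert a A \<and> \<Sum>S = n} =
    {S. S \<subseteq> A \<and> \<Sum>S = n} \<union> insert a ` {S. S \<subseteq> A \<and> a + \<Sum>S = (n::nat)}"
proof -
  have sum_insert: "\<Sum>(insert a S) = a + \<Sum>S" if "S \<subseteq> A" for S
    using that assms by (meson finite_subset subsetD sum.insert)
  show ?thesis
  proof (intro equalityI subsetI)
    fix S assume S: "S \<in> {S. S \<subseteq> insert a A \<and> \<Sum>S = n}"
    show "S \<in> {S. S \<subseteq> A \<and> \<Sum>S = n} \<union> insert a ` {S. S \<subseteq> A \<and> a + \<Sum>S = n}"
    proof (cases "a \<in> S")
      case True
      then have "S = insert a (S - {a})" "S - {a} \<subseteq> A"
        using S by auto
      then show ?thesis
        using S sum_insert[of "S - {a}"] by (metis (mono_tags, lifting) UnI2 imageI mem_Collect_eq)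
    next
      case False
      then show ?thesis
        using S by auto
    qed
  qed (use sum_insert assms(2) in auto)
qed

lemma fps_nth_prod_one_plus_X_power:
  assumes "finite A"
  shows "(\<Prod>a\<in>A. 1 + fps_X ^ a :: 'a::comm_ring_1 fps) $ n = of_nat (card {S. S \<subseteq> A \<and> \<Sum>S = n})"
  using assms
proof (induction A arbitrary: n rule: finite_induct)
  case empty
  have "{S. S \<subseteq> {} \<and> \<Sum>S = n} = (if n = 0 then {{}} else {})"
    by auto
  then show ?case
    by simp
next
  case (insert a A)
  let ?subsets = "\<lambda>n. {S. S \<subseteq> A \<and> \<Sum>S = n}"
  have "{S. S \<subseteq> A \<and> a + \<Sum>S = n} = (if n < a then {} else ?subsets (n - a))"
    by auto
  then have split: "{S. S \<subseteq> insert a A \<and> \<Sum>S = n} =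
      ?subsets n \<union> insert a ` (if n < a then {} else ?subsets (n - a))"
    using subsets_with_sum_insert[OF insert(1,2)] by simp
  have "inj_on (insert a) (?subsets m)" for m
    using insert(2) by (intro inj_onI) (metis Diff_insert_absorb mem_Collect_eq subsetD)
  moreover have "?subsets n \<inter> insert a ` ?subsets m = {}" for m
    using insert(2) by blast
  ultimately have "card {S. S \<subseteq> insert a A \<and> \<Sum>S = n} =
      card (?subsets n) + (if n < a then 0 else card (?subsets (n - a)))"
    unfolding split using insert(1) by (simp add: card_Un_disjoint card_image)
  moreover have "(\<Prod>a\<in>insert a A. 1 + fps_X ^ a :: 'a fps) =
      (\<Prod>a\<in>A. 1 + fps_X ^ a) + fps_X ^ a * (\<Prod>a\<in>A. 1 + fps_X ^ a)"
    using insert(1,2) by (simp add: distrib_right)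
  ultimately show ?case
    using insert(3) by (simp add: fps_X_power_mult_nth)
qed

lemma subsets_with_sum_bounded:
  assumes "n \<le> b"
  shows "{S. S \<subseteq> {m<..b} \<and> \<Sum>S = n} = {S. S \<subseteq> {m<..n} \<and> \<Sum>S = (n::nat)}"
proof (intro equalityI subsetI)
  fix S assume S: "S \<in> {S. S \<subseteq> {m<..b} \<and> \<Sum>S = n}"
  then have "finite S" using finite_subset by blast
  then have "x \<le> n" if "x \<in> S" for x
    using S that member_le_sum[of x S id] by simp
  then show "S \<in> {S. S \<subseteq> {m<..n} \<and> \<Sum>S = n}" using S by auto
qed (use assms in auto)

definition distinct_parts_above :: "nat \<Rightarrow> nat \<Rightarrow> nat" where
  "distinct_parts_above m n = card {S. S \<subseteq> {m<..n} \<and> \<Sum>S = n}"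

lemma qpoch_Suc: "qpoch a q (Suc n) = qpoch a q n * (1 - a * q ^ n)"
  unfolding qpoch_def by simp

lemma qpoch_Suc_shift: "qpoch a q (Suc L) = (1 - a) * qpoch (a * q) q L"
  unfolding qpoch_def prod.lessThan_Suc_shift by (simp add: mult.assoc)

lemma qpoch_minus_X_power:
  "qpoch (- (fps_X ^ Suc m)) fps_X L = (\<Prod>a\<in>{m<..m + L}. 1 + fps_X ^ a)"
proof (induction L arbitrary: m)
  case 0
  then show ?case by (simp add: qpoch_def)
next
  case (Suc L)
  have "- (fps_X ^ Suc m) * fps_X = - (fps_X ^ Suc (Suc m) :: int fps)"
    by (simp add: power_Suc2 del: power_Suc)
  moreover have "{m<..m + Suc L} = insert (Suc m) {Suc m<..Suc m + L}" by auto
  ultimately show ?case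
    using Suc[of "Suc m"] by (simp add: qpoch_Suc_shift del: power_Suc)
qed

lemma tendsto_qpoch_minus_X_power:
  "(\<lambda>L. qpoch (- (fps_X ^ Suc m)) fps_X L) \<longlonglongrightarrow> Abs_fps (\<lambda>n. int (distinct_parts_above m n))"
proof (rule tendsto_fpsI)
  fix n
  have "qpoch (- (fps_X ^ Suc m)) fps_X L $ n = int (distinct_parts_above m n)" if "n \<le> L" for L
  proof -
    have "{S. S \<subseteq> {m<..m + L} \<and> \<Sum>S = n} = {S. S \<subseteq> {m<..n} \<and> \<Sum>S = n}"
      using that by (intro subsets_with_sum_bounded) simp
    then show ?thesis
      unfolding qpoch_minus_X_power fps_nth_prod_one_plus_X_power[OF finite_greaterThanAtMost]
      by (simp add: distinct_parts_above_def)
  qed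
  then show "\<forall>\<^sub>F L in sequentially. qpoch (- (fps_X ^ Suc m)) fps_X L $ n =
      Abs_fps (\<lambda>n. int (distinct_parts_above m n)) $ n"
    unfolding eventually_sequentially by (intro exI[of _ n]) simp
qed

lemma qpoch_inf_minus_X_power:
  "qpoch_inf (- (fps_X ^ Suc m)) fps_X = Abs_fps (\<lambda>n. int (distinct_parts_above m n))"
  unfolding qpoch_inf_def using tendsto_qpoch_minus_X_power by (rule limI)

lemma qpoch_inf_Suc_shift:
  assumes "convergent (qpoch (a * q) q)"
  shows "qpoch_inf a q = (1 - a) * qpoch_inf (a * q) q"
proof -
  have "(\<lambda>L. qpoch a q (Suc L)) \<longlonglongrightarrow> (1 - a) * qpoch_inf (a * q) q"
    unfolding qpoch_Suc_shift qpoch_inf_def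
    using assms by (intro tendsto_mult_left) (simp add: convergent_LIMSEQ_iff)
  then show ?thesis
    unfolding qpoch_inf_def filterlim_sequentially_Suc by (rule limI)
qed

lemma qpoch_inf_minus_X_power_Suc:
  "qpoch_inf (- (fps_X ^ Suc m)) fps_X = (1 + fps_X ^ Suc m) * qpoch_inf (- (fps_X ^ Suc (Suc m))) fps_X"
  using qpoch_inf_Suc_shift[of "- (fps_X ^ Suc m)" fps_X] tendsto_qpoch_minus_X_power[of "Suc m"]
  by (auto simp: convergent_def mult.commute)

lemma tendsto_qpoch_inf_minus_X_power:
  "(\<lambda>m. qpoch_inf (- (fps_X ^ Suc m)) fps_X) \<longlonglongrightarrow> 1"
proof (rule tendsto_fpsI)
  fix n
  have "distinct_parts_above m n = (if n = 0 then 1 else 0)" if "n \<le> m" for m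
  proof -
    have "{S. S \<subseteq> {m<..n} \<and> \<Sum>S = n} = (if n = 0 then {{}} else {})"
      using that by auto
    then show ?thesis unfolding distinct_parts_above_def by simp
  qed
  then show "\<forall>\<^sub>F m in sequentially. qpoch_inf (- (fps_X ^ Suc m)) fps_X $ n = 1 $ n"
    unfolding eventually_sequentially qpoch_inf_minus_X_power by (intro exI[of _ n]) simp
qed

definition smallest_repeated_rest_distinct :: "nat \<Rightarrow> nat multiset \<Rightarrow> bool" where
  "smallest_repeated_rest_distinct k M \<longleftrightarrow> M \<noteq> {#} \<and> count M (Min (set_mset M)) = k \<and>
     (\<forall>x \<in> set_mset M. x \<noteq> Min (set_mset M) \<longrightarrow> count M x = 1)"

lemma D_eq_card_smallest_repeated_rest_distinct:
  "n \<noteq> 0 \<Longrightarrow> D k n = card {M. sum_mset M = n \<and> smallest_repeated_rest_distinct k M}"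
  unfolding D_def smallest_repeated_rest_distinct_def by (simp add: conj_ac)

lemma set_mset_replicate_mset_plus_mset_set:
  "0 < k \<Longrightarrow> finite S \<Longrightarrow> set_mset (replicate_mset k m + mset_set S) = insert m S"
  by simp

lemma Min_insert_greaterThan:
  "finite S \<Longrightarrow> S \<subseteq> {m<..} \<Longrightarrow> Min (insert m S) = (m :: 'a :: linorder)"
  by (rule Min_insert2) auto

lemma sum_mset_replicate_mset_plus_mset_set:
  "sum_mset (replicate_mset k m + mset_set S) = m * k + \<Sum>S"
  using sum_unfold_sum_mset[of id S] by simp

lemma smallest_repeated_rest_distinct_iff:
  assumes "0 < k"
  shows "smallest_repeated_rest_distinct k M \<longleftrightarrow>
    (\<exists>m S. finite S \<and> S \<subseteq> {m<..} \<and> M = replicate_mset k m + mset_set S)"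
proof
  assume M: "smallest_repeated_rest_distinct k M"
  define m where "m = Min (set_mset M)"
  have "m \<le> x" if "x \<in># M" for x
    using that by (simp add: m_def)
  then have "set_mset M - {m} \<subseteq> {m<..}"
    by fastforce
  moreover have "M = replicate_mset k m + mset_set (set_mset M - {m})"
    using M unfolding smallest_repeated_rest_distinct_def m_def[symmetric]
    by (auto simp: multiset_eq_iff count_mset_set' not_in_iff)
  ultimately show "\<exists>m S. finite S \<and> S \<subseteq> {m<..} \<and> M = replicate_mset k m + mset_set S"
    by blast
next
  assume "\<exists>m S. finite S \<and> S \<subseteq> {m<..} \<and> M = replicate_mset k m + mset_set S"
  then obtain m S where S: "finite S" "S \<subseteq> {m<..}" and M: "M = replicate_mset k m + mset_set S"
    by blast
  then show "smallest_repeated_rest_distinct k M"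
    using set_mset_replicate_mset_plus_mset_set[OF assms S(1)] Min_insert_greaterThan[OF S] S assms
    unfolding smallest_repeated_rest_distinct_def by (auto simp: count_mset_set' not_in_iff)
qed

lemma inj_on_replicate_mset_plus_mset_set:
  assumes "0 < k"
  shows "inj_on (\<lambda>(m, S). replicate_mset k m + mset_set S) {(m :: 'a :: linorder, S). finite S \<and> S \<subseteq> {m<..}}"
proof (rule inj_onI)
  fix p p' :: "'a \<times> 'a set"
  assume "p \<in> {(m, S). finite S \<and> S \<subseteq> {m<..}}" "p' \<in> {(m, S). finite S \<and> S \<subseteq> {m<..}}"
    and eq: "(\<lambda>(m, S). replicate_mset k m + mset_set S) p = (\<lambda>(m, S). replicate_mset k m + mset_set S) p'"
  then obtain m S m' S' where pairs: "p = (m, S)" "p' = (m', S')"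
    and S: "finite S" "S \<subseteq> {m<..}" and S': "finite S'" "S' \<subseteq> {m'<..}"
    by auto
  have "insert m S = insert m' S'"
    using eq set_mset_replicate_mset_plus_mset_set[OF assms S(1), of m]
      set_mset_replicate_mset_plus_mset_set[OF assms S'(1), of m']
    unfolding pairs by simp
  moreover from this have "m = m'"
    using Min_insert_greaterThan[OF S] Min_insert_greaterThan[OF S'] by simp
  moreover have "m \<notin> S" "m' \<notin> S'"
    using S(2) S'(2) by auto
  ultimately show "p = p'"
    unfolding pairs by (metis Diff_insert_absorb)
qed

lemma smallest_repeated_rest_distinct_partitions_eq_image:
  assumes "0 < k"
  shows "{M. sum_mset M = N \<and> smallest_repeated_rest_distinct k M} =
    (\<lambda>(m, S). replicate_mset k m + mset_set S) `
      (SIGMA m:{m. m * k \<le> N}. {S. S \<subseteq> {m<..N} \<and> \<Sum>S = N - m * k})"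
proof (intro equalityI subsetI)
  fix M assume M: "M \<in> {M. sum_mset M = N \<and> smallest_repeated_rest_distinct k M}"
  then obtain m S where S: "finite S" "S \<subseteq> {m<..}" and M_eq: "M = replicate_mset k m + mset_set S"
    using smallest_repeated_rest_distinct_iff[OF assms] by auto
  then have "m * k + \<Sum>S = N"
    using M sum_mset_replicate_mset_plus_mset_set by (simp add: mult.commute)
  moreover have "x \<le> \<Sum>S" if "x \<in> S" for x
    using member_le_sum[of x S id] S that by simp
  ultimately show "M \<in> (\<lambda>(m, S). replicate_mset k m + mset_set S) `
      (SIGMA m:{m. m * k \<le> N}. {S. S \<subseteq> {m<..N} \<and> \<Sum>S = N - m * k})"
    using S M_eq by force
next
  fix M assume "M \<in> (\<lambda>(m, S). replicate_mset k m + mset_set S) `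
      (SIGMA m:{m. m * k \<le> N}. {S. S \<subseteq> {m<..N} \<and> \<Sum>S = N - m * k})"
  then obtain m S where S: "S \<subseteq> {m<..N}" "m * k + \<Sum>S = N" and M: "M = replicate_mset k m + mset_set S"
    by auto
  then have "finite S" "S \<subseteq> {m<..}"
    using finite_subset by auto
  then show "M \<in> {M. sum_mset M = N \<and> smallest_repeated_rest_distinct k M}"
    using smallest_repeated_rest_distinct_iff[OF assms] S sum_mset_replicate_mset_plus_mset_set
    unfolding M by auto
qed

lemma card_smallest_repeated_rest_distinct:
  assumes "0 < k"
  shows "card {M. sum_mset M = N \<and> smallest_repeated_rest_distinct k M} =
    (\<Sum>m | m * k \<le> N. distinct_parts_above m (N - m * k))"
proof -
  have "{m. m * k \<le> N} = {..N div k}"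
    using assms by (auto simp: less_eq_div_iff_mult_less_eq)
  then have "finite {m. m * k \<le> N}"
    by simp
  moreover have "inj_on (\<lambda>(m, S). replicate_mset k m + mset_set S)
      (SIGMA m:{m. m * k \<le> N}. {S. S \<subseteq> {m<..N} \<and> \<Sum>S = N - m * k})"
    by (rule inj_on_subset[OF inj_on_replicate_mset_plus_mset_set[OF assms]])
      (auto intro: finite_subset)
  moreover have "card {S. S \<subseteq> {m<..N} \<and> \<Sum>S = N - m * k} = distinct_parts_above m (N - m * k)" for m
    unfolding distinct_parts_above_def by (subst subsets_with_sum_bounded) auto
  ultimately show ?thesis
    unfolding smallest_repeated_rest_distinct_partitions_eq_image[OF assms] by (simp add: card_image)
qed

lemma D_eq_sum_distinct_parts_above:
  assumes "0 < k"
  shows "D k N = (\<Sum>m | m * k \<le> N. distinct_parts_above m (N - m * k))"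
proof (cases "N = 0")
  case True
  have "{m. m * k \<le> 0} = {0}"
    using assms by auto
  moreover have "{S. S \<subseteq> {0<..0::nat} \<and> \<Sum>S = 0} = {{}}"
    by (auto dest: subsetD)
  ultimately show ?thesis
    using True unfolding D_def distinct_parts_above_def by simp
next
  case False
  then show ?thesis
    using assms by (simp add: D_eq_card_smallest_repeated_rest_distinct card_smallest_repeated_rest_distinct)
qed

lemma sums_Dgf:
  assumes "0 < k"
  shows "(\<lambda>m. fps_X ^ (m * k) * qpoch_inf (- (fps_X ^ Suc m)) fps_X) sums Dgf k"
  unfolding sums_def
proof (rule tendsto_fpsI)
  fix N
  have "(\<Sum>m<M. fps_X ^ (m * k) * qpoch_inf (- (fps_X ^ Suc m)) fps_X) $ N = Dgf k $ N"
    if "N < M" for M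
  proof -
    have "m < M" if "m * k \<le> N" for m
    proof -
      have "m \<le> m * k"
        using assms by simp
      then show ?thesis
        using that \<open>N < M\<close> by linarith
    qed
    then have restrict: "{..<M} \<inter> {m. m * k \<le> N} = {m. m * k \<le> N}"
      by auto
    have "(\<Sum>m<M. fps_X ^ (m * k) * qpoch_inf (- (fps_X ^ Suc m)) fps_X) $ N =
        (\<Sum>m<M. if N < m * k then 0 else int (distinct_parts_above m (N - m * k)))"
      by (simp add: fps_sum_nth fps_X_power_mult_nth qpoch_inf_minus_X_power cong: if_cong del: power_Suc)
    also have "\<dots> = (\<Sum>m \<in> {..<M} \<inter> {m. m * k \<le> N}. int (distinct_parts_above m (N - m * k)))"
      by (subst sum.inter_restrict) (auto intro!: sum.cong)
    also have "\<dots> = Dgf k $ N"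
      using assms by (simp add: restrict Dgf_def D_eq_sum_distinct_parts_above)
    finally show ?thesis .
  qed
  then show "\<forall>\<^sub>F M in sequentially.
      (\<Sum>m<M. fps_X ^ (m * k) * qpoch_inf (- (fps_X ^ Suc m)) fps_X) $ N = Dgf k $ N"
    unfolding eventually_sequentially by (intro exI[of _ "Suc N"]) simp
qed

lemma Dgf_1: "Dgf 1 = 2 * qpoch_inf (- fps_X) fps_X - 1"
proof -
  define P where "P m = qpoch_inf (- (fps_X ^ Suc m)) fps_X" for m
  have "(\<lambda>M. P 0 - P M) \<longlonglongrightarrow> P 0 - 1"
    unfolding P_def by (intro tendsto_diff tendsto_const tendsto_qpoch_inf_minus_X_power)
  then have "(\<lambda>M. \<Sum>m<M. P m - P (Suc m)) \<longlonglongrightarrow> P 0 - 1"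
    by (simp only: sum_lessThan_telescope')
  moreover have "P m - P (Suc m) = fps_X ^ Suc m * P (Suc m)" for m
    unfolding P_def by (subst qpoch_inf_minus_X_power_Suc) (simp add: algebra_simps)
  ultimately have "(\<lambda>m. fps_X ^ Suc m * P (Suc m)) sums (P 0 - 1)"
    by (simp add: sums_def)
  then have "(\<lambda>m. fps_X ^ m * P m) sums (P 0 - 1 + fps_X ^ 0 * P 0)"
    by (rule sums_Suc)
  moreover have "(\<lambda>m. fps_X ^ m * P m) sums Dgf 1"
    unfolding P_def using sums_Dgf[of 1] by simp
  ultimately have "Dgf 1 = 2 * P 0 - 1"
    using sums_unique2 by fastforce
  then show ?thesis
    by (simp add: P_def)
qed

lemma Dgf_Suc:
  assumes "0 < k"
  shows "Dgf (Suc k) = 2 * qpoch_inf (- fps_X) fps_X + (fps_X ^ k - 1) * Dgf k"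
proof -
  define g where "g j m = fps_X ^ (m * j) * qpoch_inf (- (fps_X ^ Suc m)) fps_X" for j m
  have g_sums: "g j sums Dgf j" if "0 < j" for j
    unfolding g_def using that by (rule sums_Dgf)
  have "fps_X ^ k * g k m = g k (Suc m) + g (Suc k) (Suc m)" for m
    unfolding g_def by (subst qpoch_inf_minus_X_power_Suc) (simp add: algebra_simps power_add)
  then have "(\<lambda>m. g k (Suc m) + g (Suc k) (Suc m)) sums (fps_X ^ k * Dgf k)"
    using sums_mult_left[OF g_sums[OF assms], of "fps_X ^ k"] by simp
  then have "(\<lambda>m. g k m + g (Suc k) m) sums (fps_X ^ k * Dgf k + 2 * qpoch_inf (- fps_X) fps_X)"
    using sums_Suc[of "\<lambda>m. g k m + g (Suc k) m"] by (simp add: g_def)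
  moreover have "(\<lambda>m. g k m + g (Suc k) m) sums (Dgf k + Dgf (Suc k))"
    using assms by (intro sums_add g_sums) simp_all
  ultimately show ?thesis
    by (simp add: sums_unique2 algebra_simps)
qed

lemma alternating_qpoch_sum_Suc:
  "(\<Sum>j<Suc k. (-1) ^ j * qpoch (q ^ (Suc k - j)) q j) =
    1 - (1 - q ^ k) * (\<Sum>j<k. (-1) ^ j * qpoch (q ^ (k - j)) q j)"
proof -
  have "(-1) ^ Suc j * qpoch (q ^ (k - j)) q (Suc j) = - ((1 - q ^ k) * ((-1) ^ j * qpoch (q ^ (k - j)) q j))"
    if "j < k" for j
  proof -
    have "q ^ (k - j) * q ^ j = q ^ k"
      using that by (simp add: power_add[symmetric])
    then show ?thesis
      by (simp add: qpoch_Suc algebra_simps)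
  qed
  moreover have "qpoch (q ^ Suc k) q 0 = 1"
    by (simp add: qpoch_def)
  ultimately show ?thesis
    unfolding sum.lessThan_Suc_shift by (simp add: sum_distrib_left sum_negf[symmetric] mult_ac)
qed

lemma Dgf_closed_form:
  assumes "0 < k"
  shows "Dgf k = 2 * qpoch_inf (- fps_X) fps_X * (\<Sum>j<k. (-1) ^ j * qpoch (fps_X ^ (k - j)) fps_X j)
    + (-1) ^ k * qpoch fps_X fps_X (k - 1)"
  using assms
proof (induction k rule: nat_induct_non_zero)
  case 1
  show ?case
    using Dgf_1 by (simp add: qpoch_def)
next
  case (Suc k)
  define P where "P = qpoch_inf (- fps_X) fps_X"
  define C where "C k = (\<Sum>j<k. (-1) ^ j * qpoch (fps_X ^ (k - j)) fps_X j)" for k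
  define Q where "Q k = qpoch fps_X fps_X (k - 1)" for k
  have Q_Suc: "Q (Suc k) = Q k * (1 - fps_X ^ k)"
    using Suc(1) by (cases k) (simp_all add: Q_def qpoch_Suc)
  have "Dgf (Suc k) = 2 * P + (fps_X ^ k - 1) * (2 * P * C k + (-1) ^ k * Q k)"
    using Dgf_Suc[OF Suc(1)] Suc(2) by (simp add: P_def C_def Q_def)
  also have "\<dots> = 2 * P * (1 - (1 - fps_X ^ k) * C k) + (-1) ^ Suc k * (Q k * (1 - fps_X ^ k))"
    by (simp add: algebra_simps)
  also have "\<dots> = 2 * P * C (Suc k) + (-1) ^ Suc k * Q (Suc k)"
    unfolding C_def alternating_qpoch_sum_Suc Q_Suc ..
  finally show ?case
    by (simp add: P_def C_def Q_def)
qed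

theorem theorem10:
  fixes k :: nat
  assumes "k \<ge> 1"
  shows "(\<lambda>n. fps_X ^ (n * k) * qpoch_inf (- (fps_X ^ (n + 1))) fps_X) sums Dgf k
       \<and> Dgf k = 2 * qpoch_inf (- fps_X) fps_X *
                   (\<Sum>j<k. (-1) ^ j * qpoch (fps_X ^ (k - j)) fps_X j)
                 + (-1) ^ k * qpoch fps_X fps_X (k - 1)"
  using assms sums_Dgf[of k] Dgf_closed_form[of k] by simp

end
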